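(* Let $p\in(0,1)$, $\beta>0$, $\mu_P,\mu_N\in\mathbb R^d$ with $\mu_{pn}:=\mu_P-\mu_N\neq 0$, and let $\Sigma_P$ be symmetric positive semidefinite and $\Sigma_N$ symmetric positive definite $d\times d$ matrices. Let $\pi(\alpha)=\sqrt{(1-\alpha)/\alpha}$ for $\alpha\in(0,1)$ and $Q_F(\alpha_P,\alpha_N)=\frac{(1-p)\alpha_N+\beta^2p\alpha_P}{1-\alpha_P}$. Consider sequences generated as follows (the alternating descent scheme of the MPMF algorithm): start with $w_1=\mu_{pn}/\|\mu_{pn}\|$; at round $t$, given a unit vector $w_t$ with $C_t:=w_t^T\mu_{pn}>0$, set $A_t=\sqrt{w_t^T\Sigma_P w_t}$, $B_t=\sqrt{w_t^T\Sigma_N w_t}$, and let $(\alpha_{P,t},\alpha_{N,t})$ be a minimizer of $Q_F(\alpha_P,\alpha_N)$ over $\{(\alpha_P,\alpha_N)\in(0,1)^2:\ \pi(\alpha_N)B_t+\pi(\alpha_P)A_t=C_t\}$ (assumed to exist); set $\tau_t=\pi(\alpha_{P,t})$, $\lambda_t(w)=\frac{w^T\mu_{pn}-\tau_t\sqrt{w^T\Sigma_P w}}{\sqrt{w^T\Sigma_N w}}$, $\eta_t=\lambda_t(w_t)$, and choose a unit vector $w_{t+1}$ with $\lambda_t(w_{t+1})\ge\eta_t$ (either $w_{t+1}=w_t$, or a unit vector with $f_t(w_{t+1})\ge 0$ where $f_t(w)=w^T\mu_{pn}-\tau_t\sqrt{w^T\Sigma_P w}-\eta_t\sqrt{w^T\Sigma_N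 w}$). Then the sequence of objective values $Q_F(\alpha_{P,t},\alpha_{N,t})$ is monotonically non-increasing in $t$ and converges.
   Context: This is the minimax probability machine for the $F_\beta$ measure (MPMF): the problem is $\min_{\alpha_P,\alpha_N,w} \frac{(1-p)\alpha_N+\beta^2p\alpha_P}{1-\alpha_P}$ subject to $\|w\|=1$ and $\pi(\alpha_N)\sqrt{w^T\Sigma_N w}+\pi(\alpha_P)\sqrt{w^T\Sigma_P w}=w^T\mu_{pn}$, where $\mu_P,\Sigma_P$ ($\mu_N,\Sigma_N$) are the mean and covariance of the positive (negative) class, $p$ the positive class proportion, and $\alpha_P,\alpha_N$ worst-case false negative and false positive rates. The algorithm alternates between minimizing over $(\alpha_P,\alpha_N)$ for fixed $w$ and, for fixed $\alpha_P$, improving $w$ so as to decrease $\alpha_N$ (the new value being $\alpha_{N,t}'=1/(1+\lambda_t(w_{t+1})^2)$). *)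

theory Defs
  imports "HOL-Analysis.Analysis"
begin

definition mpm_pi :: "real \<Rightarrow> real" where
  "mpm_pi \<alpha> = sqrt ((1 - \<alpha>) / \<alpha>)"

definition QF :: "real \<Rightarrow> real \<Rightarrow> real \<Rightarrow> real \<Rightarrow> real" where
  "QF p \<beta> \<alpha>P \<alpha>N = ((1 - p) * \<alpha>N + \<beta>\<^sup>2 * p * \<alpha>P) / (1 - \<alpha>P)"

definition qnorm :: "real^'d^'d \<Rightarrow> real^'d \<Rightarrow> real" where
  "qnorm S w = sqrt (w \<bullet> (S *v w))"

definition sym_psd :: "real^'d^'d \<Rightarrow> bool" where
  "sym_psd S \<longleftrightarrow> transpose S = S \<and> (\<forall>x. 0 \<le> x \<bullet> (S *v x))"

definition sym_pd :: "real^'d^'d \<Rightarrow> bool" where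
  "sym_pd S \<longleftrightarrow> transpose S = S \<and> (\<forall>x. x \<noteq> 0 \<longrightarrow> 0 < x \<bullet> (S *v x))"

definition lam :: "real^'d \<Rightarrow> real^'d^'d \<Rightarrow> real^'d^'d \<Rightarrow> real \<Rightarrow> real^'d \<Rightarrow> real" where
  "lam \<mu> SP SN \<tau> w = (w \<bullet> \<mu> - \<tau> * qnorm SP w) / qnorm SN w"

end

theory Submission
  imports Defs
begin

text \<open>
  Write \<open>A = sqrt(w\<^sup>T \<Sigma>\<^sub>P w)\<close>, \<open>B = sqrt(w\<^sup>T \<Sigma>\<^sub>N w)\<close>, \<open>C = w\<^sup>T \<mu>\<^sub>p\<^sub>n\<close>. For a fixed
  \<open>\<tau> = \<pi>(\<alpha>\<^sub>P)\<close> the constraint \<open>\<pi>(\<alpha>\<^sub>N) B + \<tau> A = C\<close> says exactly that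
  \<open>\<pi>(\<alpha>\<^sub>N) = \<lambda>(w)\<close>, so \<open>\<eta>\<^sub>t = \<pi>(\<alpha>\<^sub>N\<^sub>,\<^sub>t)\<close>. Since \<open>\<lambda>(w\<^sub>t\<^sub>+\<^sub>1) \<ge> \<eta>\<^sub>t > 0\<close>, the pair
  \<open>(\<alpha>\<^sub>P\<^sub>,\<^sub>t, 1/(1 + \<lambda>(w\<^sub>t\<^sub>+\<^sub>1)\<^sup>2))\<close> is feasible for \<open>w\<^sub>t\<^sub>+\<^sub>1\<close>, and its second entry is
  at most \<open>\<alpha>\<^sub>N\<^sub>,\<^sub>t\<close> because \<open>\<pi>\<close> is decreasing. As \<open>Q\<^sub>F\<close> is increasing in \<open>\<alpha>\<^sub>N\<close>,
  the minimum at round \<open>t+1\<close> is at most \<open>Q\<^sub>F\<close> of this pair, which is at most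
  the value at round \<open>t\<close>. The objective values are nonnegative, hence converge.
\<close>

definition mpm_feasible ::
    "real^'d \<Rightarrow> real^'d^'d \<Rightarrow> real^'d^'d \<Rightarrow> real^'d \<Rightarrow> real \<Rightarrow> real \<Rightarrow> bool" where
  "mpm_feasible \<mu> SP SN w \<alpha>P \<alpha>N \<longleftrightarrow>
     mpm_pi \<alpha>N * qnorm SN w + mpm_pi \<alpha>P * qnorm SP w = w \<bullet> \<mu>"

lemma mpm_pi_pos: "0 < \<alpha> \<Longrightarrow> \<alpha> < 1 \<Longrightarrow> 0 < mpm_pi \<alpha>"
  unfolding mpm_pi_def by simp

lemma mpm_pi_le_iff:
  assumes "0 < \<alpha>" "\<alpha> \<le> 1" "0 < \<alpha>'" "\<alpha>' \<le> 1"
  shows "mpm_pi \<alpha> \<le> mpm_pi \<alpha>' \<longleftrightarrow> \<alpha>' \<le> \<alpha>"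
proof -
  have "mpm_pi \<alpha> \<le> mpm_pi \<alpha>' \<longleftrightarrow> 1 / \<alpha> - 1 \<le> 1 / \<alpha>' - 1"
    unfolding mpm_pi_def using assms by (simp add: diff_divide_distrib)
  also have "\<dots> \<longleftrightarrow> \<alpha>' \<le> \<alpha>"
    using assms by (simp add: field_simps)
  finally show ?thesis .
qed

lemma mpm_pi_inverse_one_plus_square:
  assumes "0 < L"
  shows "mpm_pi (1 / (1 + L\<^sup>2)) = L"
proof -
  have "0 < 1 + L\<^sup>2"
    by (simp add: add_pos_nonneg)
  then have "(1 - 1 / (1 + L\<^sup>2)) / (1 / (1 + L\<^sup>2)) = L\<^sup>2"
    by (simp add: field_simps)
  then show ?thesis
    unfolding mpm_pi_def using assms by simp
qed

lemma inverse_one_plus_square_bounds: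
  fixes L :: real
  assumes "0 < L"
  shows "0 < 1 / (1 + L\<^sup>2)" "1 / (1 + L\<^sup>2) < 1"
proof -
  have "0 < L\<^sup>2"
    using assms by simp
  then have gt_one: "1 < 1 + L\<^sup>2"
    by linarith
  then show "0 < 1 / (1 + L\<^sup>2)"
    by (intro divide_pos_pos) linarith+
  show "1 / (1 + L\<^sup>2) < 1"
    using divide_less_eq_1_pos[of "1 + L\<^sup>2" 1] gt_one by linarith
qed

lemma QF_mono_alphaN:
  assumes "p \<le> 1" "\<alpha>P < 1" "\<alpha>N \<le> \<alpha>N'"
  shows "QF p \<beta> \<alpha>P \<alpha>N \<le> QF p \<beta> \<alpha>P \<alpha>N'"
  unfolding QF_def using assms
  by (intro divide_right_mono add_right_mono mult_left_mono) auto

lemma QF_nonneg: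
  assumes "0 \<le> p" "p \<le> 1" "0 \<le> \<alpha>P" "\<alpha>P < 1" "0 \<le> \<alpha>N"
  shows "0 \<le> QF p \<beta> \<alpha>P \<alpha>N"
  unfolding QF_def using assms by (intro divide_nonneg_pos) auto

lemma qnorm_pos:
  assumes "sym_pd S" "w \<noteq> 0"
  shows "0 < qnorm S w"
  using assms unfolding qnorm_def sym_pd_def by simp

lemma lam_eq_iff_mpm_feasible:
  assumes "0 < qnorm SN w"
  shows "lam \<mu> SP SN (mpm_pi \<alpha>P) w = mpm_pi \<alpha>N \<longleftrightarrow> mpm_feasible \<mu> SP SN w \<alpha>P \<alpha>N"
  unfolding lam_def mpm_feasible_def using assms by (auto simp: field_simps)

lemma QF_alternating_step:
  assumes p: "p \<le> 1"
    and range: "0 < \<alpha>P" "\<alpha>P < 1" "0 < \<alpha>N" "\<alpha>N < 1"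
    and SN_w: "0 < qnorm SN w" and SN_w': "0 < qnorm SN w'"
    and feasible: "mpm_feasible \<mu> SP SN w \<alpha>P \<alpha>N"
    and optimal: "\<And>a b. 0 < a \<Longrightarrow> a < 1 \<Longrightarrow> 0 < b \<Longrightarrow> b < 1 \<Longrightarrow>
        mpm_feasible \<mu> SP SN w' a b \<Longrightarrow> QF p \<beta> \<alpha>P' \<alpha>N' \<le> QF p \<beta> a b"
    and improved: "lam \<mu> SP SN (mpm_pi \<alpha>P) w \<le> lam \<mu> SP SN (mpm_pi \<alpha>P) w'"
  shows "QF p \<beta> \<alpha>P' \<alpha>N' \<le> QF p \<beta> \<alpha>P \<alpha>N"
proof -
  define L where "L = lam \<mu> SP SN (mpm_pi \<alpha>P) w'"
  define b where "b = 1 / (1 + L\<^sup>2)"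
  have "lam \<mu> SP SN (mpm_pi \<alpha>P) w = mpm_pi \<alpha>N"
    using feasible by (rule lam_eq_iff_mpm_feasible[OF SN_w, THEN iffD2])
  then have L_ge: "mpm_pi \<alpha>N \<le> L"
    using improved unfolding L_def by (rule subst)
  then have "0 < L"
    using mpm_pi_pos[OF range(3,4)] by linarith
  then have b_range: "0 < b" "b < 1" and pi_b: "mpm_pi b = L"
    unfolding b_def by (fact inverse_one_plus_square_bounds mpm_pi_inverse_one_plus_square)+
  have "lam \<mu> SP SN (mpm_pi \<alpha>P) w' = mpm_pi b"
    unfolding pi_b L_def ..
  then have "mpm_feasible \<mu> SP SN w' \<alpha>P b"
    by (rule lam_eq_iff_mpm_feasible[OF SN_w', THEN iffD1])
  then have "QF p \<beta> \<alpha>P' \<alpha>N' \<le> QF p \<beta> \<alpha>P b"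
    by (rule optimal[OF range(1,2) b_range])
  also have "\<dots> \<le> QF p \<beta> \<alpha>P \<alpha>N"
  proof (rule QF_mono_alphaN[OF p range(2)])
    show "b \<le> \<alpha>N"
      using mpm_pi_le_iff[of \<alpha>N b] L_ge pi_b range b_range by linarith
  qed
  finally show ?thesis .
qed

lemma convergent_if_eventually_decreasing_bounded_below:
  fixes f :: "nat \<Rightarrow> real"
  assumes dec: "\<And>t. t \<ge> k \<Longrightarrow> f (t + 1) \<le> f t"
    and bounded: "\<And>t. t \<ge> k \<Longrightarrow> B \<le> f t"
  shows "convergent f"
proof -
  have "decseq (\<lambda>n. f (n + k))"
  proof (rule decseq_SucI)
    show "f (Suc n + k) \<le> f (n + k)" for n
      using dec[of "n + k"] by simp
  qed
  moreover have "\<forall>n. B \<le> f (n + k)"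
    by (simp add: bounded)
  ultimately have "convergent (\<lambda>n. f (n + k))"
    using decseq_convergent convergentI by metis
  then show ?thesis
    by (simp add: convergent_ignore_initial_segment)
qed

theorem theorem1:
  fixes p \<beta> :: real
    and \<mu>P \<mu>N :: "real^'d"
    and \<Sigma>P \<Sigma>N :: "real^'d^'d"
    and w :: "nat \<Rightarrow> real^'d"
    and aP aN :: "nat \<Rightarrow> real"
  assumes p: "0 < p" "p < 1"
    and beta: "0 < \<beta>"
    and mu: "\<mu>P - \<mu>N \<noteq> 0"
    and SP: "sym_psd \<Sigma>P"
    and SN: "sym_pd \<Sigma>N"
    and w1: "w 1 = (1 / norm (\<mu>P - \<mu>N)) *\<^sub>R (\<mu>P - \<mu>N)"
    and wunit: "\<And>t. t \<ge> 1 \<Longrightarrow> norm (w t) = 1"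
    and a_range: "\<And>t. t \<ge> 1 \<Longrightarrow> 0 < aP t \<and> aP t < 1 \<and> 0 < aN t \<and> aN t < 1"
    and a_feas: "\<And>t. t \<ge> 1 \<Longrightarrow>
        mpm_pi (aN t) * qnorm \<Sigma>N (w t) + mpm_pi (aP t) * qnorm \<Sigma>P (w t) = w t \<bullet> (\<mu>P - \<mu>N)"
    and a_min: "\<And>t a b. t \<ge> 1 \<Longrightarrow> 0 < a \<Longrightarrow> a < 1 \<Longrightarrow> 0 < b \<Longrightarrow> b < 1 \<Longrightarrow>
        mpm_pi b * qnorm \<Sigma>N (w t) + mpm_pi a * qnorm \<Sigma>P (w t) = w t \<bullet> (\<mu>P - \<mu>N) \<Longrightarrow>
        QF p \<beta> (aP t) (aN t) \<le> QF p \<beta> a b"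
    and w_step: "\<And>t. t \<ge> 1 \<Longrightarrow>
        lam (\<mu>P - \<mu>N) \<Sigma>P \<Sigma>N (mpm_pi (aP t)) (w (t + 1))
          \<ge> lam (\<mu>P - \<mu>N) \<Sigma>P \<Sigma>N (mpm_pi (aP t)) (w t)"
  shows "(\<forall>t\<ge>1. QF p \<beta> (aP (t + 1)) (aN (t + 1)) \<le> QF p \<beta> (aP t) (aN t))
         \<and> convergent (\<lambda>t. QF p \<beta> (aP t) (aN t))"
proof -
  have SN_pos: "0 < qnorm \<Sigma>N (w t)" if "t \<ge> 1" for t
    using wunit[OF that] by (intro qnorm_pos[OF SN]) auto
  have decreasing: "QF p \<beta> (aP (t + 1)) (aN (t + 1)) \<le> QF p \<beta> (aP t) (aN t)"
    if t: "t \<ge> 1" for t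
  proof (rule QF_alternating_step[where \<mu> = "\<mu>P - \<mu>N" and SP = \<Sigma>P and SN = \<Sigma>N
        and w = "w t" and w' = "w (t + 1)"])
    show "mpm_feasible (\<mu>P - \<mu>N) \<Sigma>P \<Sigma>N (w t) (aP t) (aN t)"
      using a_feas[OF t] unfolding mpm_feasible_def .
    show "QF p \<beta> (aP (t + 1)) (aN (t + 1)) \<le> QF p \<beta> a b"
      if "0 < a" "a < 1" "0 < b" "b < 1" "mpm_feasible (\<mu>P - \<mu>N) \<Sigma>P \<Sigma>N (w (t + 1)) a b"
      for a b
      using a_min[of "t + 1" a b] that unfolding mpm_feasible_def by simp
  qed (use p a_range[OF t] SN_pos t w_step[OF t] in simp_all)
  have nonneg: "0 \<le> QF p \<beta> (aP t) (aN t)" if "t \<ge> 1" for t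
    using a_range[OF that] p by (intro QF_nonneg) auto
  have "convergent (\<lambda>t. QF p \<beta> (aP t) (aN t))"
    using decreasing nonneg by (rule convergent_if_eventually_decreasing_bounded_below)
  with decreasing show ?thesis
    by blast
qed

end
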